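(* For $a>0$ define $P_1:\mathbb{R}^{3\times3}\to\mathbb{R}$ by $P_1(R)=\sqrt{\|R^TR-I\|_F^2+a}$. Then $P_1$ is twice differentiable with locally Lipschitz second derivatives, and there is a constant $L$ (depending on $a$) such that $P_1$ is $L$-curvature bounded.
   Context: $\|\cdot\|_F$ is the Frobenius norm and $R$ is identified with a vector in $\mathbb{R}^9$. A function $\phi$ is $L$-curvature bounded if $\phi(x)+\frac L2\|x\|^2$ is convex and $\|\nabla\phi(x)-\nabla\phi(x')\|\le L\|x-x'\|$ for all $x,x'$. *)

theory Defs
  imports "HOL-Analysis.Analysis"
begin

text \<open>Frobenius norm of a matrix (as in the paper).  On the type real^'n^'m it
  coincides with the library norm, i.e. the Euclidean norm after identifying
  the matrix with a vector in R^(m*n).\<close>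
definition frob_norm :: "real^'n^'m \<Rightarrow> real" where
  "frob_norm M = sqrt (\<Sum>i\<in>UNIV. \<Sum>j\<in>UNIV. (M$i$j)^2)"

definition P1 :: "real \<Rightarrow> real^3^3 \<Rightarrow> real" where
  "P1 a R = sqrt ((frob_norm (transpose R ** R - mat 1))^2 + a)"

definition curvature_bounded :: "real \<Rightarrow> ('a::euclidean_space \<Rightarrow> real) \<Rightarrow> bool" where
  "curvature_bounded L \<phi> \<longleftrightarrow>
     convex_on UNIV (\<lambda>x. \<phi> x + L / 2 * (norm x)^2) \<and>
     (\<exists>g. (\<forall>x. (\<phi> has_derivative (\<lambda>h. g x \<bullet> h)) (at x)) \<and>
          (\<forall>x x'. norm (g x - g x') \<le> L * norm (x - x')))"

end

theory Submission
  imports Defs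
begin

(* With M = R\<^sup>T R - I and s = P1(R) = sqrt (|M|\<^sup>2 + a), the gradient of P1 is (2/s) R M and
   its Hessian is assembled from R, M, 1/s, matrix products, the transpose and inner products
   by bounded bilinear operations.  Locally Lipschitz maps are closed under these operations,
   and s \<ge> sqrt a > 0 makes 1/s locally Lipschitz; so the Hessian is locally Lipschitz.
   Globally, |R|\<^sup>2 = <I, M + I> \<le> sqrt n |M| + n and |M| \<le> s, so the Hessian is bounded
   uniformly in R.  Hence the gradient is L-Lipschitz, which makes the gradient of
   P1 + L/2 |R|\<^sup>2 monotone and therefore this function convex. *)

section \<open>Matrices as a Euclidean space\<close>

lemma frob_norm_eq_norm: "frob_norm (A::real^'n^'m) = norm A"
  unfolding frob_norm_def norm_eq_sqrt_inner by (simp add: inner_vec_def power2_eq_square)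

lemma matrix_mult_nth_nth: "((A::real^'n^'m) ** B) $ i $ j = A $ i \<bullet> transpose B $ j"
  by (simp add: matrix_matrix_mult_def inner_vec_def transpose_def mult.commute)

lemma inner_transpose_transpose: "transpose (A::real^'n^'m) \<bullet> transpose B = A \<bullet> B"
  by (simp add: inner_vec_def transpose_def) (rule sum.swap)

lemma norm_transpose: "norm (transpose (A::real^'n^'m)) = norm A"
  by (simp add: norm_eq_sqrt_inner inner_transpose_transpose)

lemma inner_matrix_mult_right:
  "(A::real^'p^'m) \<bullet> ((B::real^'n^'m) ** C) = (transpose B ** A) \<bullet> C"
proof -
  have "A \<bullet> (B ** C) = (\<Sum>i\<in>UNIV. \<Sum>j\<in>UNIV. \<Sum>k\<in>UNIV. A$i$j * B$i$k * C$k$j)"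
    by (simp add: inner_vec_def matrix_matrix_mult_def sum_distrib_left mult.assoc)
  also have "\<dots> = (\<Sum>k\<in>UNIV. \<Sum>j\<in>UNIV. \<Sum>i\<in>UNIV. A$i$j * B$i$k * C$k$j)"
    by (subst sum.swap, subst (1 2) sum.swap) (rule refl)
  also have "\<dots> = (transpose B ** A) \<bullet> C"
    by (simp add: inner_vec_def matrix_matrix_mult_def transpose_def sum_distrib_left
        sum_distrib_right mult_ac)
  finally show ?thesis .
qed

lemma norm_matrix_mult_le: "norm ((A::real^'n^'m) ** (B::real^'p^'n)) \<le> norm A * norm B"
proof -
  have norm_sq: "norm M ^ 2 = (\<Sum>i\<in>UNIV. norm (M $ i) ^ 2)" for M :: "'c::real_inner^'r"
    by (simp add: power2_norm_eq_inner inner_vec_def)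
  have "norm (A ** B) ^ 2 = (\<Sum>i\<in>UNIV. \<Sum>j\<in>UNIV. (A $ i \<bullet> transpose B $ j) ^ 2)"
    by (simp add: norm_sq matrix_mult_nth_nth)
  also have "\<dots> \<le> (\<Sum>i\<in>UNIV. \<Sum>j\<in>UNIV. norm (A $ i) ^ 2 * norm (transpose B $ j) ^ 2)"
    by (intro sum_mono) (simp add: power2_norm_eq_inner Cauchy_Schwarz_ineq)
  also have "\<dots> = norm A ^ 2 * norm (transpose B) ^ 2"
    by (simp only: norm_sq[of A] norm_sq[of "transpose B"] sum_product)
  also have "\<dots> = (norm A * norm B) ^ 2"
    by (simp add: norm_transpose power_mult_distrib)
  finally show ?thesis
    by (rule power2_le_imp_le) simp
qed

lemma bounded_bilinear_matrix_mult:
  "bounded_bilinear ((**) :: real^'n^'m \<Rightarrow> real^'p^'n \<Rightarrow> real^'p^'m)"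
  unfolding bilinear_conv_bounded_bilinear[symmetric] bilinear_def linear_iff
  by (auto simp: vec_eq_iff matrix_matrix_mult_def sum.distrib sum_distrib_left algebra_simps)

interpretation matrix_mult: bounded_bilinear "(**) :: real^'n^'m \<Rightarrow> real^'p^'n \<Rightarrow> real^'p^'m"
  by (rule bounded_bilinear_matrix_mult)

lemma bounded_linear_transpose: "bounded_linear (transpose :: real^'n^'m \<Rightarrow> real^'m^'n)"
  unfolding linear_conv_bounded_linear[symmetric] linear_iff
  by (auto simp: vec_eq_iff transpose_def)

lift_definition transpose_blinfun :: "(real^'n^'m) \<Rightarrow>\<^sub>L (real^'m^'n)" is transpose
  by (rule bounded_linear_transpose)

declare transpose_blinfun.rep_eq [simp]

lemma inner_mat_1_mat_1: "mat 1 \<bullet> (mat 1 :: real^'n^'n) = real CARD('n)"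
  by (simp add: inner_vec_def mat_def if_distrib cong: if_cong)

lemma norm_mat_1: "norm (mat 1 :: real^'n^'n) = sqrt (real CARD('n))"
  by (simp add: norm_eq_sqrt_inner inner_mat_1_mat_1)

section \<open>Locally Lipschitz functions\<close>

definition locally_lipschitz :: "('a::metric_space \<Rightarrow> 'b::metric_space) \<Rightarrow> bool" where
  "locally_lipschitz f \<longleftrightarrow> (\<forall>x. \<exists>e>0. \<exists>K. K-lipschitz_on (ball x e) f)"

lemma locally_lipschitz_const: "locally_lipschitz (\<lambda>x. c)"
  unfolding locally_lipschitz_def using lipschitz_on_constant zero_less_one by blast

lemma locally_lipschitz_ident: "locally_lipschitz (\<lambda>x. x)"
  unfolding locally_lipschitz_def using lipschitz_on_id zero_less_one by blast

lemma locally_lipschitz_common_ball: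
  assumes "locally_lipschitz f" "locally_lipschitz g"
  obtains e Kf Kg where "e > 0" "Kf-lipschitz_on (ball x e) f" "Kg-lipschitz_on (ball x e) g"
proof -
  obtain e1 K1 where "e1 > 0" "K1-lipschitz_on (ball x e1) f"
    using assms(1) unfolding locally_lipschitz_def by blast
  moreover obtain e2 K2 where "e2 > 0" "K2-lipschitz_on (ball x e2) g"
    using assms(2) unfolding locally_lipschitz_def by blast
  ultimately show thesis
    by (intro that[of "min e1 e2" K1 K2]) (auto intro: lipschitz_on_subset)
qed

lemma locally_lipschitz_add:
  fixes f g :: "'a::metric_space \<Rightarrow> 'b::real_normed_vector"
  assumes "locally_lipschitz f" "locally_lipschitz g"
  shows "locally_lipschitz (\<lambda>x. f x + g x)"
  unfolding locally_lipschitz_def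
  by (metis locally_lipschitz_common_ball[OF assms] lipschitz_on_add)

lemma locally_lipschitz_diff:
  fixes f g :: "'a::metric_space \<Rightarrow> 'b::real_normed_vector"
  assumes "locally_lipschitz f" "locally_lipschitz g"
  shows "locally_lipschitz (\<lambda>x. f x - g x)"
  unfolding locally_lipschitz_def
  by (metis locally_lipschitz_common_ball[OF assms] lipschitz_on_diff)

lemma lipschitz_on_ball_norm_le:
  fixes f :: "'a::metric_space \<Rightarrow> 'b::real_normed_vector"
  assumes "K-lipschitz_on (ball x e) f" "y \<in> ball x e"
  shows "norm (f y) \<le> norm (f x) + K * e"
proof -
  have "x \<in> ball x e" using assms(2) by (auto intro: le_less_trans[OF zero_le_dist])
  then have "dist (f y) (f x) \<le> K * dist y x" using assms lipschitz_onD by blast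
  also have "\<dots> \<le> K * e"
    using assms lipschitz_on_nonneg by (intro mult_left_mono) (auto simp: dist_commute)
  finally have "norm (f y - f x) \<le> K * e" by (simp add: dist_norm)
  with norm_triangle_ineq2[of "f y" "f x"] show ?thesis by linarith
qed

lemma locally_lipschitz_bilinear:
  fixes f :: "'a::metric_space \<Rightarrow> 'b::real_normed_vector" and g :: "'a \<Rightarrow> 'c::real_normed_vector"
    and prod :: "'b \<Rightarrow> 'c \<Rightarrow> 'd::real_normed_vector"
  assumes prod: "bounded_bilinear prod" and "locally_lipschitz f" "locally_lipschitz g"
  shows "locally_lipschitz (\<lambda>x. prod (f x) (g x))"
  unfolding locally_lipschitz_def
proof
  fix x
  obtain e Kf Kg where e: "e > 0" and f: "Kf-lipschitz_on (ball x e) f"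
    and g: "Kg-lipschitz_on (ball x e) g"
    using locally_lipschitz_common_ball[OF assms(2,3)] by blast
  obtain K where K: "K > 0" "\<And>a b. norm (prod a b) \<le> norm a * norm b * K"
    using bounded_bilinear.pos_bounded[OF prod] by blast
  define Bf where "Bf = norm (f x) + Kf * e"
  define Bg where "Bg = norm (g x) + Kg * e"
  have bounds: "norm (f y) \<le> Bf" "norm (g y) \<le> Bg" if "y \<in> ball x e" for y
    using lipschitz_on_ball_norm_le[OF f that] lipschitz_on_ball_norm_le[OF g that]
    by (simp_all add: Bf_def Bg_def)
  have nonneg: "0 \<le> Kf" "0 \<le> Kg" "0 \<le> Bf" "0 \<le> Bg"
    using f g bounds[of x] e lipschitz_on_nonneg by (auto intro: order_trans[OF norm_ge_zero])
  have "(K * (Kf * Bg + Bf * Kg))-lipschitz_on (ball x e) (\<lambda>x. prod (f x) (g x))"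
  proof (rule lipschitz_onI)
    fix y z assume y: "y \<in> ball x e" and z: "z \<in> ball x e"
    have "prod (f y) (g y) - prod (f z) (g z) = prod (f y - f z) (g y) + prod (f z) (g y - g z)"
      by (simp add: bounded_bilinear.diff_left[OF prod] bounded_bilinear.diff_right[OF prod])
    then have "norm (prod (f y) (g y) - prod (f z) (g z))
        \<le> norm (prod (f y - f z) (g y)) + norm (prod (f z) (g y - g z))"
      by (simp add: norm_triangle_ineq)
    also have "\<dots> \<le> norm (f y - f z) * norm (g y) * K + norm (f z) * norm (g y - g z) * K"
      by (intro add_mono K(2))
    also have "\<dots> \<le> (Kf * dist y z) * Bg * K + Bf * (Kg * dist y z) * K"
      using K nonneg bounds[OF y] bounds[OF z]
        lipschitz_onD[OF f y z] lipschitz_onD[OF g y z]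
      by (intro add_mono mult_right_mono mult_mono) (auto simp: dist_norm)
    finally show
      "dist (prod (f y) (g y)) (prod (f z) (g z)) \<le> K * (Kf * Bg + Bf * Kg) * dist y z"
      by (simp add: dist_norm algebra_simps)
  qed (use K nonneg in simp)
  then show "\<exists>e>0. \<exists>K. K-lipschitz_on (ball x e) (\<lambda>x. prod (f x) (g x))" using e by blast
qed

lemma locally_lipschitz_compose:
  assumes "C-lipschitz_on T \<phi>" "\<And>x. f x \<in> T" "locally_lipschitz f"
  shows "locally_lipschitz (\<lambda>x. \<phi> (f x))"
  unfolding locally_lipschitz_def
proof
  fix x
  obtain e K where "e > 0" "K-lipschitz_on (ball x e) f"
    using assms(3) unfolding locally_lipschitz_def by blast
  moreover have "C-lipschitz_on (f ` ball x e) \<phi>"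
    by (rule lipschitz_on_subset[OF assms(1)]) (use assms(2) in auto)
  ultimately show "\<exists>e>0. \<exists>K. K-lipschitz_on (ball x e) (\<lambda>x. \<phi> (f x))"
    using lipschitz_on_compose2 by blast
qed

lemma locally_lipschitz_linear:
  assumes "bounded_linear L" "locally_lipschitz f"
  shows "locally_lipschitz (\<lambda>x. L (f x))"
proof -
  obtain K where "K-lipschitz_on UNIV L"
    using bounded_linear.lipschitz_boundE[OF assms(1)] by blast
  then show ?thesis using locally_lipschitz_compose[OF _ _ assms(2)] by blast
qed

lemma lipschitz_on_sqrt_shift:
  assumes "a > 0"
  shows "(1 / sqrt a)-lipschitz_on {0..} (\<lambda>t. sqrt (t + a))"
proof (rule lipschitz_onI)
  fix x y :: real assume "x \<in> {0..}" "y \<in> {0..}"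
  then have le: "0 \<le> sqrt a" "sqrt a \<le> sqrt (x + a)" "sqrt a \<le> sqrt (y + a)"
    and sq: "sqrt (x + a) ^ 2 = x + a" "sqrt (y + a) ^ 2 = y + a"
    using assms by auto
  then have "sqrt a \<le> sqrt (x + a) + sqrt (y + a)"
    by linarith
  then have "\<bar>sqrt (x + a) - sqrt (y + a)\<bar> * sqrt a
      \<le> \<bar>sqrt (x + a) - sqrt (y + a)\<bar> * (sqrt (x + a) + sqrt (y + a))"
    by (rule mult_left_mono) simp
  also have "\<dots> = \<bar>(sqrt (x + a) - sqrt (y + a)) * (sqrt (x + a) + sqrt (y + a))\<bar>"
    using le by (simp add: abs_mult)
  also have "\<dots> = \<bar>x - y\<bar>"
    using sq by (simp add: algebra_simps power2_eq_square)
  finally show "dist (sqrt (x + a)) (sqrt (y + a)) \<le> 1 / sqrt a * dist x y"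
    using assms by (simp add: dist_real_def field_simps)
qed (use assms in simp)

lemma lipschitz_on_inverse_atLeast:
  assumes "c > 0"
  shows "(1 / c\<^sup>2)-lipschitz_on {c..} (\<lambda>t::real. 1 / t)"
proof (rule lipschitz_onI)
  fix x y :: real assume "x \<in> {c..}" "y \<in> {c..}"
  then have "x > 0" "y > 0" "c\<^sup>2 \<le> x * y"
    using assms by (auto simp: power2_eq_square intro: mult_mono)
  then have "dist (1 / x) (1 / y) = \<bar>x - y\<bar> / (x * y)"
    by (simp add: dist_real_def field_simps abs_minus_commute)
  also have "\<dots> \<le> \<bar>x - y\<bar> / c\<^sup>2"
    using \<open>x > 0\<close> \<open>y > 0\<close> \<open>c\<^sup>2 \<le> x * y\<close> assms by (intro divide_left_mono) auto
  finally show "dist (1 / x) (1 / y) \<le> 1 / c\<^sup>2 * dist x y"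
    by (simp add: dist_real_def)
qed (use assms in simp)

section \<open>Curvature-bounded functions\<close>

lemma convex_on_UNIV_if_monotone_gradient:
  fixes f :: "'a::real_inner \<Rightarrow> real"
  assumes deriv: "\<And>x. (f has_derivative (\<lambda>h. G x \<bullet> h)) (at x)"
    and mono: "\<And>x y. 0 \<le> (G x - G y) \<bullet> (x - y)"
  shows "convex_on UNIV f"
proof (rule convex_onI)
  fix t :: real and x y :: 'a assume t: "0 < t" "t < 1"
  define \<phi> where "\<phi> u = f (x + u *\<^sub>R (y - x))" for u
  define \<phi>' where "\<phi>' u = G (x + u *\<^sub>R (y - x)) \<bullet> (y - x)" for u
  have "(\<phi> has_real_derivative \<phi>' u) (at u)" for u
  proof -
    have "((\<lambda>u. x + u *\<^sub>R (y - x)) has_derivative (\<lambda>h. h *\<^sub>R (y - x))) (at u)"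
      by (auto intro!: derivative_eq_intros)
    from has_derivative_compose[OF this deriv] show ?thesis
      unfolding has_field_derivative_def \<phi>_def[abs_def] \<phi>'_def
      by (rule has_derivative_eq_rhs) (simp add: fun_eq_iff o_def mult.commute)
  qed
  moreover have "\<phi>' u \<le> \<phi>' v" if "u \<le> v" for u v
  proof -
    have "0 \<le> (G (x + v *\<^sub>R (y - x)) - G (x + u *\<^sub>R (y - x)))
        \<bullet> ((x + v *\<^sub>R (y - x)) - (x + u *\<^sub>R (y - x)))"
      by (rule mono)
    also have "\<dots> = (v - u) * (\<phi>' v - \<phi>' u)"
      by (simp add: \<phi>'_def inner_diff_left scaleR_diff_left[symmetric] algebra_simps)
    finally have "0 \<le> (v - u) * (\<phi>' v - \<phi>' u)" .
    with that show ?thesis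
      by (cases "u = v") (auto simp: zero_le_mult_iff)
  qed
  ultimately have "convex_on UNIV \<phi>"
    by (intro convex_on_realI[where f' = \<phi>']) auto
  then have "\<phi> t \<le> (1 - t) * \<phi> 0 + t * \<phi> 1"
    using convex_onD[of UNIV \<phi> t 0 1] t by simp
  then show "f ((1 - t) *\<^sub>R x + t *\<^sub>R y) \<le> (1 - t) * f x + t * f y"
    by (simp add: \<phi>_def algebra_simps)
qed simp

lemma curvature_bounded_if_lipschitz_gradient:
  fixes f :: "'a::euclidean_space \<Rightarrow> real"
  assumes deriv: "\<And>x. (f has_derivative (\<lambda>h. g x \<bullet> h)) (at x)"
    and lipschitz: "L-lipschitz_on UNIV g"
  shows "curvature_bounded L f"
proof -
  have "convex_on UNIV (\<lambda>x. f x + L / 2 * (norm x)\<^sup>2)"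
  proof (rule convex_on_UNIV_if_monotone_gradient[where G = "\<lambda>x. g x + L *\<^sub>R x"])
    fix x
    show "((\<lambda>x. f x + L / 2 * (norm x)\<^sup>2) has_derivative (\<lambda>h. (g x + L *\<^sub>R x) \<bullet> h)) (at x)"
      unfolding power2_norm_eq_inner
      by (rule has_derivative_eq_rhs[OF has_derivative_add[OF deriv has_derivative_mult_right[OF
            has_derivative_inner[OF has_derivative_ident has_derivative_ident]]]])
        (simp add: fun_eq_iff inner_add_left inner_commute[of _ x] algebra_simps)
  next
    fix x y
    have "- ((g x - g y) \<bullet> (x - y)) \<le> norm (g x - g y) * norm (x - y)"
      using Cauchy_Schwarz_ineq2[of "g x - g y" "x - y"] by linarith
    also have "\<dots> \<le> L * norm (x - y) * norm (x - y)"
      using lipschitz_onD[OF lipschitz] by (simp add: dist_norm mult_right_mono)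
    also have "\<dots> = L * ((x - y) \<bullet> (x - y))"
      by (simp add: power2_norm_eq_inner[symmetric] power2_eq_square)
    finally have "0 \<le> (g x - g y) \<bullet> (x - y) + L * ((x - y) \<bullet> (x - y))"
      by linarith
    also have "\<dots> = ((g x - g y) + L *\<^sub>R (x - y)) \<bullet> (x - y)"
      by (simp only: inner_add_left inner_scaleR_left)
    also have "\<dots> = (g x + L *\<^sub>R x - (g y + L *\<^sub>R y)) \<bullet> (x - y)"
      by (simp add: algebra_simps)
    finally show "0 \<le> (g x + L *\<^sub>R x - (g y + L *\<^sub>R y)) \<bullet> (x - y)" .
  qed
  with deriv lipschitz_onD[OF lipschitz] show ?thesis
    unfolding curvature_bounded_def by (auto simp: dist_norm)
qed

section \<open>The orthogonality penalty\<close>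

definition gram_defect :: "real^'n^'n \<Rightarrow> real^'n^'n" where
  "gram_defect R = transpose R ** R - mat 1"

definition penalty :: "real \<Rightarrow> real^'n^'n \<Rightarrow> real" where
  "penalty a R = sqrt ((norm (gram_defect R))\<^sup>2 + a)"

definition penalty_grad :: "real \<Rightarrow> real^'n^'n \<Rightarrow> real^'n^'n" where
  "penalty_grad a R = (2 / penalty a R) *\<^sub>R (R ** gram_defect R)"

(* h \<mapsto> (2/s) (R h\<^sup>T R + R R\<^sup>T h + h M) - (4/s\<^sup>3) <R M, h> R M,
   with s = penalty a R and M = gram_defect R; here prod_right A h = A ** h and
   prod_left B h = h ** B. *)
definition penalty_hessian :: "real \<Rightarrow> real^'n^'n \<Rightarrow> (real^'n^'n) \<Rightarrow>\<^sub>L (real^'n^'n)" where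
  "penalty_hessian a R =
     (2 / penalty a R) *\<^sub>R
       ((matrix_mult.prod_right R o\<^sub>L matrix_mult.prod_left R o\<^sub>L transpose_blinfun)
        + matrix_mult.prod_right (R ** transpose R) + matrix_mult.prod_left (gram_defect R))
     - (4 / penalty a R ^ 3) *\<^sub>R
       (blinfun_scaleR_left (R ** gram_defect R) o\<^sub>L blinfun_inner_right (R ** gram_defect R))"

lemma P1_eq_penalty: "P1 a = penalty a"
  by (simp add: fun_eq_iff P1_def penalty_def gram_defect_def frob_norm_eq_norm)

lemma sqrt_le_penalty: "a \<ge> 0 \<Longrightarrow> sqrt a \<le> penalty a R"
  by (simp add: penalty_def)

lemma penalty_pos: "a > 0 \<Longrightarrow> penalty a R > 0"
  by (simp add: penalty_def add_nonneg_pos)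

lemma transpose_gram_defect: "transpose (gram_defect R) = gram_defect R"
  by (simp add: gram_defect_def matrix_transpose_mul
      linear_diff[OF bounded_linear.linear[OF bounded_linear_transpose]])

lemma has_derivative_gram_defect:
  "(gram_defect has_derivative (\<lambda>h. transpose h ** R + transpose R ** h)) (at R)"
proof -
  have "((\<lambda>R. transpose R ** R) has_derivative (\<lambda>h. transpose R ** h + transpose h ** R)) (at R)"
    by (rule matrix_mult.FDERIV[OF bounded_linear_imp_has_derivative[OF bounded_linear_transpose]
          has_derivative_ident])
  then show ?thesis
    unfolding gram_defect_def[abs_def]
    by (rule has_derivative_eq_rhs[OF has_derivative_diff[OF _ has_derivative_const]])
      (simp add: fun_eq_iff add.commute)
qed

lemma inner_gram_defect_derivative:
  "gram_defect R \<bullet> (transpose h ** R + transpose R ** h) = 2 * ((R ** gram_defect R) \<bullet> h)"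
proof -
  have "gram_defect R \<bullet> (transpose h ** R)
      = transpose (gram_defect R) \<bullet> transpose (transpose h ** R)"
    by (simp add: inner_transpose_transpose)
  also have "\<dots> = gram_defect R \<bullet> (transpose R ** h)"
    by (simp add: transpose_gram_defect matrix_transpose_mul)
  finally show ?thesis
    by (simp add: inner_add_right inner_matrix_mult_right)
qed

lemma has_derivative_penalty:
  assumes "a > 0"
  shows "(penalty a has_derivative (\<lambda>h. penalty_grad a R \<bullet> h)) (at R)"
proof -
  have pos: "0 < gram_defect R \<bullet> gram_defect R + a"
    using assms by (simp add: add_nonneg_pos)
  have "((\<lambda>R. gram_defect R \<bullet> gram_defect R + a) has_derivative
      (\<lambda>h. 4 * ((R ** gram_defect R) \<bullet> h))) (at R)"
    by (rule has_derivative_eq_rhs[OF has_derivative_add[OF has_derivative_inner[OF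
          has_derivative_gram_defect has_derivative_gram_defect] has_derivative_const]])
      (simp add: fun_eq_iff inner_commute[of _ "gram_defect R"] inner_gram_defect_derivative)
  from has_derivative_real_sqrt[OF pos this] show ?thesis
    unfolding penalty_def[abs_def] penalty_grad_def power2_norm_eq_inner
    by (rule has_derivative_eq_rhs) (simp add: fun_eq_iff field_simps)
qed

lemma has_derivative_penalty_grad:
  assumes "a > 0"
  shows "(penalty_grad a has_derivative blinfun_apply (penalty_hessian a R)) (at R)"
proof -
  have "penalty a R \<noteq> 0"
    using penalty_pos[OF assms, of R] by linarith
  from has_derivative_divide'[OF has_derivative_const has_derivative_penalty[OF assms] this]
  have inverse: "((\<lambda>R. 2 / penalty a R) has_derivative
      (\<lambda>h. - (4 / penalty a R ^ 3) * ((R ** gram_defect R) \<bullet> h))) (at R)"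
    by (rule has_derivative_eq_rhs)
      (simp add: fun_eq_iff penalty_grad_def field_simps power3_eq_cube)
  have product: "((\<lambda>R. R ** gram_defect R) has_derivative
      (\<lambda>h. R ** (transpose h ** R + transpose R ** h) + h ** gram_defect R)) (at R)"
    by (rule matrix_mult.FDERIV[OF has_derivative_ident has_derivative_gram_defect])
  show ?thesis
    unfolding penalty_grad_def[abs_def]
    by (rule has_derivative_eq_rhs[OF has_derivative_scaleR[OF inverse product]])
      (simp add: fun_eq_iff penalty_hessian_def blinfun.bilinear_simps matrix_add_ldistrib
        matrix_mul_assoc algebra_simps)
qed

lemma locally_lipschitz_penalty_hessian:
  assumes "a > 0"
  shows "locally_lipschitz (penalty_hessian a :: real^'n^'n \<Rightarrow> _)"
proof -
  note bilinear = locally_lipschitz_bilinear and linear = locally_lipschitz_linear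
  have R: "locally_lipschitz (\<lambda>R::real^'n^'n. R)"
    by (rule locally_lipschitz_ident)
  have Rt: "locally_lipschitz (\<lambda>R::real^'n^'n. transpose R)"
    by (rule linear[OF bounded_linear_transpose R])
  have M: "locally_lipschitz (gram_defect :: real^'n^'n \<Rightarrow> _)"
    unfolding gram_defect_def[abs_def]
    by (rule locally_lipschitz_diff[OF bilinear[OF bounded_bilinear_matrix_mult Rt R]
          locally_lipschitz_const])
  have RM: "locally_lipschitz (\<lambda>R::real^'n^'n. R ** gram_defect R)"
    by (rule bilinear[OF bounded_bilinear_matrix_mult R M])
  have s: "locally_lipschitz (penalty a :: real^'n^'n \<Rightarrow> _)"
    unfolding penalty_def[abs_def] power2_norm_eq_inner
    by (rule locally_lipschitz_compose[OF lipschitz_on_sqrt_shift[OF assms] _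
          bilinear[OF bounded_bilinear_inner M M]]) simp
  have inv: "locally_lipschitz (\<lambda>R::real^'n^'n. 1 / penalty a R)"
    by (rule locally_lipschitz_compose[OF lipschitz_on_inverse_atLeast[of "sqrt a"] _ s])
      (use assms in \<open>auto intro: sqrt_le_penalty\<close>)
  have c2: "locally_lipschitz (\<lambda>R::real^'n^'n. 2 / penalty a R)"
    using bilinear[OF bounded_bilinear_mult locally_lipschitz_const inv, of 2] by simp
  have c4: "locally_lipschitz (\<lambda>R::real^'n^'n. 4 / penalty a R ^ 3)"
    using bilinear[OF bounded_bilinear_mult locally_lipschitz_const
        bilinear[OF bounded_bilinear_mult inv bilinear[OF bounded_bilinear_mult inv inv]], of 4]
    by (simp add: power3_eq_cube mult.assoc)
  have first: "locally_lipschitz (\<lambda>R::real^'n^'n.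
      (matrix_mult.prod_right R o\<^sub>L matrix_mult.prod_left R o\<^sub>L transpose_blinfun)
      + matrix_mult.prod_right (R ** transpose R) + matrix_mult.prod_left (gram_defect R))"
    by (intro locally_lipschitz_add
        bilinear[OF bounded_bilinear_blinfun_compose _ locally_lipschitz_const]
        bilinear[OF bounded_bilinear_blinfun_compose]
        linear[OF matrix_mult.bounded_linear_prod_right]
        linear[OF matrix_mult.bounded_linear_prod_left]
        bilinear[OF bounded_bilinear_matrix_mult] R Rt M)
  have second: "locally_lipschitz (\<lambda>R::real^'n^'n.
      blinfun_scaleR_left (R ** gram_defect R) o\<^sub>L blinfun_inner_right (R ** gram_defect R))"
    by (rule bilinear[OF bounded_bilinear_blinfun_compose
          linear[OF bounded_linear_blinfun_scaleR_left RM]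
          linear[OF bounded_linear_blinfun_inner_right RM]])
  show ?thesis
    unfolding penalty_hessian_def[abs_def]
    by (rule locally_lipschitz_diff[OF bilinear[OF bounded_bilinear_scaleR c2 first]
          bilinear[OF bounded_bilinear_scaleR c4 second]])
qed

lemma norm_sq_le_gram_defect:
  "norm R ^ 2 \<le> sqrt (real CARD('n)) * norm (gram_defect R) + real CARD('n)" for R :: "real^'n^'n"
proof -
  have "norm R ^ 2 = mat 1 \<bullet> (transpose R ** R)"
    by (simp add: inner_matrix_mult_right power2_norm_eq_inner)
  also have "\<dots> = mat 1 \<bullet> gram_defect R + real CARD('n)"
    by (simp add: gram_defect_def inner_diff_right inner_mat_1_mat_1)
  also have "mat 1 \<bullet> gram_defect R \<le> sqrt (real CARD('n)) * norm (gram_defect R)"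
    using norm_cauchy_schwarz[of "mat 1" "gram_defect R"] by (simp add: norm_mat_1)
  finally show ?thesis by simp
qed

lemma norm_penalty_hessian_apply_le:
  fixes R h :: "real^'n^'n"
  assumes "a \<ge> 0"
  defines "s \<equiv> penalty a R" and "M \<equiv> gram_defect R"
  shows "norm (penalty_hessian a R h)
    \<le> (2 / s * (2 * norm R ^ 2 + norm M) + 4 / s ^ 3 * (norm R ^ 2 * norm M ^ 2)) * norm h"
proof -
  have s: "s \<ge> 0"
    using assms by (simp add: s_def penalty_def)
  have "norm (R ** (transpose h ** R)) \<le> norm R * (norm h * norm R)"
    by (rule order_trans[OF norm_matrix_mult_le mult_left_mono])
      (use norm_matrix_mult_le[of "transpose h" R] in \<open>simp_all add: norm_transpose\<close>)
  moreover have "norm ((R ** transpose R) ** h) \<le> norm R * norm R * norm h"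
    by (rule order_trans[OF norm_matrix_mult_le mult_right_mono])
      (use norm_matrix_mult_le[of R "transpose R"] in \<open>simp_all add: norm_transpose\<close>)
  moreover have "norm (h ** M) \<le> norm h * norm M"
    by (rule norm_matrix_mult_le)
  ultimately have first: "norm (R ** (transpose h ** R) + (R ** transpose R) ** h + h ** M)
      \<le> (2 * norm R ^ 2 + norm M) * norm h"
    using norm_triangle_ineq[of "R ** (transpose h ** R) + (R ** transpose R) ** h" "h ** M"]
      norm_triangle_ineq[of "R ** (transpose h ** R)" "(R ** transpose R) ** h"]
    by (simp add: power2_eq_square algebra_simps)
  have "norm (((R ** M) \<bullet> h) *\<^sub>R (R ** M)) \<le> norm (R ** M) * norm h * norm (R ** M)"
    using Cauchy_Schwarz_ineq2[of "R ** M" h] by (simp add: mult_right_mono)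
  also have "\<dots> \<le> (norm R * norm M) * norm h * (norm R * norm M)"
    using norm_matrix_mult_le[of R M] by (intro mult_mono) auto
  finally have second:
      "norm (((R ** M) \<bullet> h) *\<^sub>R (R ** M)) \<le> norm R ^ 2 * norm M ^ 2 * norm h"
    by (simp add: power2_eq_square algebra_simps)
  have "penalty_hessian a R h
      = (2 / s) *\<^sub>R (R ** (transpose h ** R) + (R ** transpose R) ** h + h ** M)
      - (4 / s ^ 3) *\<^sub>R (((R ** M) \<bullet> h) *\<^sub>R (R ** M))"
    by (simp add: penalty_hessian_def s_def M_def blinfun.bilinear_simps)
  also have "norm \<dots>
      \<le> 2 / s * norm (R ** (transpose h ** R) + (R ** transpose R) ** h + h ** M)
      + 4 / s ^ 3 * norm (((R ** M) \<bullet> h) *\<^sub>R (R ** M))"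
    using s by (simp add: norm_triangle_ineq4[THEN order_trans])
  also have "\<dots> \<le> 2 / s * ((2 * norm R ^ 2 + norm M) * norm h)
      + 4 / s ^ 3 * (norm R ^ 2 * norm M ^ 2 * norm h)"
    using s first second by (intro add_mono mult_left_mono) auto
  finally show ?thesis
    by (simp add: algebra_simps)
qed

lemma penalty_hessian_coefficient_le:
  fixes a m \<rho> c n :: real
  assumes "a > 0" "m \<ge> 0" "c \<ge> 0" "n \<ge> 0" "\<rho> \<ge> 0" "\<rho> \<le> c * m + n"
  defines "s \<equiv> sqrt (m\<^sup>2 + a)"
  shows "2 / s * (2 * \<rho> + m) + 4 / s ^ 3 * (\<rho> * m\<^sup>2) \<le> 8 * c + 2 + 8 * n / sqrt a"
proof -
  have "m \<le> s" "sqrt a \<le> s"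
    using assms by (auto simp: s_def intro: real_le_rsqrt)
  have s: "s > 0"
    using \<open>sqrt a \<le> s\<close> real_sqrt_gt_zero[OF assms(1)] by linarith
  have q: "m / s \<le> 1"
    using \<open>m \<le> s\<close> s by simp
  have p: "1 / s \<le> 1 / sqrt a"
    using \<open>sqrt a \<le> s\<close> s assms by (intro divide_left_mono) auto
  have "2 / s * (2 * \<rho> + m) \<le> 2 / s * (2 * (c * m + n) + m)"
    using assms s by (intro mult_left_mono) auto
  also have "\<dots> = (4 * c + 2) * (m / s) + 4 * n * (1 / s)"
    using s by (simp add: field_simps)
  also have "\<dots> \<le> (4 * c + 2) * 1 + 4 * n * (1 / sqrt a)"
    using assms(3,4) q p by (intro add_mono mult_left_mono) auto
  finally have first: "2 / s * (2 * \<rho> + m) \<le> 4 * c + 2 + 4 * n / sqrt a"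
    by simp
  have "4 / s ^ 3 * (\<rho> * m\<^sup>2) = 4 * (m / s)\<^sup>2 * (\<rho> / s)"
    using s by (simp add: field_simps power2_eq_square power3_eq_cube)
  also have "\<dots> \<le> 4 * 1 * ((c * m + n) / s)"
    using assms(2-6) s q
    by (intro mult_mono mult_left_mono divide_right_mono) (auto simp: power_le_one)
  also have "\<dots> = 4 * c * (m / s) + 4 * n * (1 / s)"
    using s by (simp add: field_simps)
  also have "\<dots> \<le> 4 * c * 1 + 4 * n * (1 / sqrt a)"
    using assms(3,4) q p by (intro add_mono mult_left_mono) auto
  finally have "4 / s ^ 3 * (\<rho> * m\<^sup>2) \<le> 4 * c + 4 * n / sqrt a"
    by simp
  moreover have "8 * n / sqrt a = 4 * n / sqrt a + 4 * n / sqrt a"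
    by (simp add: add_divide_distrib[symmetric])
  ultimately show ?thesis
    using first by linarith
qed

lemma norm_penalty_hessian_le:
  fixes R :: "real^'n^'n"
  assumes "a > 0"
  defines "L \<equiv> 8 * sqrt (real CARD('n)) + 2 + 8 * real CARD('n) / sqrt a"
  shows "norm (penalty_hessian a R) \<le> L"
proof (rule norm_blinfun_bound)
  show "0 \<le> L"
    using assms by (simp add: L_def)
  fix h
  have "norm (penalty_hessian a R h)
      \<le> (2 / penalty a R * (2 * norm R ^ 2 + norm (gram_defect R))
         + 4 / penalty a R ^ 3 * (norm R ^ 2 * norm (gram_defect R) ^ 2)) * norm h"
    using assms by (intro norm_penalty_hessian_apply_le) simp
  also have "\<dots> \<le> L * norm h"
    unfolding penalty_def L_def
    by (intro mult_right_mono penalty_hessian_coefficient_le[OF assms(1) norm_ge_zero _ _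
          zero_le_power2 norm_sq_le_gram_defect]) simp_all
  finally show "norm (penalty_hessian a R h) \<le> L * norm h" .
qed

lemma lipschitz_penalty_grad:
  assumes "a > 0"
  shows "(8 * sqrt (real CARD('n)) + 2 + 8 * real CARD('n) / sqrt a)-lipschitz_on UNIV
    (penalty_grad a :: real^'n^'n \<Rightarrow> _)"
  by (rule bounded_derivative_imp_lipschitz)
    (use assms has_derivative_penalty_grad norm_penalty_hessian_le in
      \<open>auto simp: norm_blinfun.rep_eq has_derivative_at_withinI\<close>)

theorem lemma9:
  fixes a :: real
  assumes "a > 0"
  shows "(\<exists>g H. (\<forall>R. (P1 a has_derivative (\<lambda>h. g R \<bullet> h)) (at R)) \<and>
                (\<forall>R. (g has_derivative blinfun_apply (H R)) (at R)) \<and>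
                (\<forall>R. \<exists>e>0. \<exists>K. K-lipschitz_on (ball R e) H)) \<and>
         (\<exists>L. curvature_bounded L (P1 a))"
proof
  show "\<exists>g H. (\<forall>R. (P1 a has_derivative (\<lambda>h. g R \<bullet> h)) (at R)) \<and>
                (\<forall>R. (g has_derivative blinfun_apply (H R)) (at R)) \<and>
                (\<forall>R. \<exists>e>0. \<exists>K. K-lipschitz_on (ball R e) H)"
    using has_derivative_penalty[OF assms] has_derivative_penalty_grad[OF assms]
      locally_lipschitz_penalty_hessian[OF assms]
    unfolding P1_eq_penalty locally_lipschitz_def by blast
  show "\<exists>L. curvature_bounded L (P1 a)"
    using curvature_bounded_if_lipschitz_gradient[OF has_derivative_penalty[OF assms]
        lipschitz_penalty_grad[OF assms]]
    unfolding P1_eq_penalty by blast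
qed

end
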